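(* Let $\mathcal C=\{\tau_k\mid k\in\mathcal K\}$ be a translation-based cipher on $V=(\mathbb F_2)^n=V_1\oplus\cdots\oplus V_b$, $V_j\cong(\mathbb F_2)^m$, with $\ell$ rounds, round maps $\gamma_h,\lambda_h$ ($1\le h\le \ell$) and key-schedule $\Phi:\mathcal K\to V^\ell$. Suppose $\Phi$ is 3-round independent at round $i$ for some $2\le i\le \ell-1$. Suppose that every S-box $f$ composing the parallel maps $\gamma_i$ and $\gamma_{i+1}$ is (1) differentially $2^r$-uniform, with $r<m$, and (2) strongly $(r-1)$-anti-invariant, and that $\lambda_i$ is strongly proper. Then there do not exist non-trivial partitions $\mathcal A,\mathcal B$ of $V$ such that for all $k\in\mathcal K$ the map $\tau_k$ maps $\mathcal A$ onto $\mathcal B$. In particular, $\Gamma(\mathcal C)=\langle\tau_k\mid k\in\mathcal K\rangle$ is primitive.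
   Context: Let $m,b>1$, $n=mb$, and $V=(\mathbb F_2)^n=V_1\oplus\cdots\oplus V_b$ with each $V_j\cong(\mathbb F_2)^m$. Permutations act on the right ($v\mapsto v\gamma$); $\sigma_v$ denotes the translation $x\mapsto x+v$. A parallel map is $\gamma\in\mathrm{Sym}(V)$ with $(v_1\oplus\cdots\oplus v_b)\gamma=v_1\gamma_1\oplus\cdots\oplus v_b\gamma_b$ for fixed permutations $\gamma_j$ of $V_j$ (the S-boxes). A wall is a subspace $\bigoplus_{j\in I}V_j$ with $\emptyset\ne I\subsetneq\{1,\dots,b\}$. A linear map $\lambda\in\mathrm{GL}(V)$ is strongly proper if no wall is mapped by $\lambda$ into a wall (including itself). A translation-based (tb) cipher with $\ell$ rounds: for each round $h$ there is a parallel map $\gamma_h$ with $0\gamma_h=0$ and $\lambda_h\in\mathrm{GL}(V)$, both independent of the key; a key-schedule $\Phi:\mathcal K\to V^\ell$, $k\mapsto(k_1,\dots,k_\ell)$; and the encryption function is $\tau_k=\gamma_1\lambda_1\sigma_{k_1}\gamma_2\lambda_2\sigma_{k_2}\cdots\gamma_\ell\lambda_\ell\sigma_{k_\ell}$. $\Phi$ is 3-round independent at round $i$ if there are fixed $\bar k_j\in V$ ($j\notin\{i-1,i,i+1\}$) such that for every $(k_{i-1},k_i,k_{i+1})\in V^3$ the tuple $(\bar k_1,\dots,\bar k_{i-2},k_{i-1},k_i,k_{i+1},\bar k_{i+2},\dots,\bar k_\ell)$ lies in $\mathrm{Im}(\Phi)$. For $f:(\mathbb F_2)^m\to(\mathbb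 F_2)^m$, $\delta_f(a,b)=|\{x: f(x+a)+f(x)=b\}|$ and $f$ is differentially $\delta$-uniform if $\delta=\max_{a\ne0,b}\delta_f(a,b)$. For $f$ with $f(0)=0$, $f$ is strongly $r$-anti-invariant if whenever $U,W$ are subspaces of $(\mathbb F_2)^m$ with $f(U)=W$, either $\dim U=\dim W<m-r$ or $U=W=(\mathbb F_2)^m$. A permutation $\rho$ maps a partition $\mathcal A$ onto a partition $\mathcal B$ if $\{A\rho: A\in\mathcal A\}=\mathcal B$. A partition of $V$ is trivial if it is $\{\{v\}:v\in V\}$ or $\{V\}$. A transitive group $G\le\mathrm{Sym}(V)$ is primitive if it preserves no non-trivial partition of $V$. *)

theory Defs
  imports Main "HOL.Vector_Spaces" "HOL-Library.Z2" "HOL-Library.Function_Algebras" "HOL-Library.Disjoint_Sets" "HOL-Library.Cardinality"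
begin

text \<open>A block V_j = (F_2)^m is the function space 'm => bit
  (m = CARD('m)); V = V_1 + ... + V_b is 'b => 'm => bit (b = CARD('b)),
  with pointwise addition (Function_Algebras).\<close>

definition sc :: "bit \<Rightarrow> ('a \<Rightarrow> bit) \<Rightarrow> ('a \<Rightarrow> bit)" where
  "sc c f = (\<lambda>x. c * f x)"

definition scV :: "bit \<Rightarrow> ('b \<Rightarrow> 'a \<Rightarrow> bit) \<Rightarrow> ('b \<Rightarrow> 'a \<Rightarrow> bit)" where
  "scV c v = (\<lambda>j. sc c (v j))"

abbreviation f2_subspace :: "('m \<Rightarrow> bit) set \<Rightarrow> bool" where
  "f2_subspace U \<equiv> module.subspace sc U"

abbreviation f2_dim :: "('m \<Rightarrow> bit) set \<Rightarrow> nat" where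
  "f2_dim U \<equiv> vector_space.dim sc U"

definition GL_V :: "(('b \<Rightarrow> 'm \<Rightarrow> bit) \<Rightarrow> ('b \<Rightarrow> 'm \<Rightarrow> bit)) set" where
  "GL_V = {L. Vector_Spaces.linear scV scV L \<and> bij L}"

definition parallel_map :: "('b \<Rightarrow> ('m \<Rightarrow> bit) \<Rightarrow> ('m \<Rightarrow> bit)) \<Rightarrow> ('b \<Rightarrow> 'm \<Rightarrow> bit) \<Rightarrow> ('b \<Rightarrow> 'm \<Rightarrow> bit)" where
  "parallel_map S v = (\<lambda>j. S j (v j))"

definition wall :: "'b set \<Rightarrow> ('b \<Rightarrow> 'm \<Rightarrow> bit) set" where
  "wall I = {v. \<forall>j. j \<notin> I \<longrightarrow> v j = 0}"

definition is_wall :: "('b \<Rightarrow> 'm \<Rightarrow> bit) set \<Rightarrow> bool" where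
  "is_wall W \<longleftrightarrow> (\<exists>I. I \<noteq> {} \<and> I \<noteq> UNIV \<and> W = wall I)"

definition strongly_proper :: "(('b \<Rightarrow> 'm \<Rightarrow> bit) \<Rightarrow> ('b \<Rightarrow> 'm \<Rightarrow> bit)) \<Rightarrow> bool" where
  "strongly_proper L \<longleftrightarrow> L \<in> GL_V \<and>
     (\<forall>W1 W2. is_wall W1 \<and> is_wall W2 \<longrightarrow> \<not> (L ` W1 \<subseteq> W2))"

text \<open>Encryption: rounds applied left to right (right action):
  v |-> v gamma_1 lambda_1 sigma_{k_1} ... gamma_h lambda_h sigma_{k_h}.\<close>
fun enc_rounds :: "(nat \<Rightarrow> 'b \<Rightarrow> ('m \<Rightarrow> bit) \<Rightarrow> ('m \<Rightarrow> bit))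
    \<Rightarrow> (nat \<Rightarrow> ('b \<Rightarrow> 'm \<Rightarrow> bit) \<Rightarrow> ('b \<Rightarrow> 'm \<Rightarrow> bit))
    \<Rightarrow> (nat \<Rightarrow> ('b \<Rightarrow> 'm \<Rightarrow> bit)) \<Rightarrow> nat \<Rightarrow> ('b \<Rightarrow> 'm \<Rightarrow> bit) \<Rightarrow> ('b \<Rightarrow> 'm \<Rightarrow> bit)" where
  "enc_rounds S L kk 0 v = v"
| "enc_rounds S L kk (Suc h) v =
     L (Suc h) (parallel_map (S (Suc h)) (enc_rounds S L kk h v)) + kk (Suc h)"

text \<open>Key schedule Phi : K -> V^ell, with Phi k h = k_h for 1 <= h <= ell.\<close>
definition three_round_indep ::
  "('k \<Rightarrow> nat \<Rightarrow> ('b \<Rightarrow> 'm \<Rightarrow> bit)) \<Rightarrow> nat \<Rightarrow> nat \<Rightarrow> bool" where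
  "three_round_indep Phi ell i \<longleftrightarrow>
     (\<exists>kbar. \<forall>x y z. \<exists>k. \<forall>h\<in>{1..ell}.
        Phi k h = (if h = i - 1 then x else if h = i then y else if h = i + 1 then z else kbar h))"

definition delta_f :: "(('m \<Rightarrow> bit) \<Rightarrow> ('m \<Rightarrow> bit)) \<Rightarrow> ('m \<Rightarrow> bit) \<Rightarrow> ('m \<Rightarrow> bit) \<Rightarrow> nat" where
  "delta_f f a b = card {x. f (x + a) + f x = b}"

definition diff_uniform :: "(('m \<Rightarrow> bit) \<Rightarrow> ('m \<Rightarrow> bit)) \<Rightarrow> nat \<Rightarrow> bool" where
  "diff_uniform f \<delta> \<longleftrightarrow> \<delta> = Max {delta_f f a b | a b. a \<noteq> 0}"

definition strongly_anti_invariant :: "(('m::finite \<Rightarrow> bit) \<Rightarrow> ('m \<Rightarrow> bit)) \<Rightarrow> nat \<Rightarrow> bool" where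
  "strongly_anti_invariant f r \<longleftrightarrow>
     (\<forall>U W. f2_subspace U \<and> f2_subspace W \<and> f ` U = W \<longrightarrow>
        (f2_dim U = f2_dim W \<and> f2_dim U < CARD('m) - r) \<or> (U = UNIV \<and> W = UNIV))"

definition trivial_partition :: "'a set set \<Rightarrow> bool" where
  "trivial_partition P \<longleftrightarrow> P = {{v} | v. True} \<or> P = {UNIV}"

definition maps_partition :: "('a \<Rightarrow> 'a) \<Rightarrow> 'a set set \<Rightarrow> 'a set set \<Rightarrow> bool" where
  "maps_partition g A B \<longleftrightarrow> (\<lambda>X. g ` X) ` A = B"

inductive_set gen_group :: "('a \<Rightarrow> 'a) set \<Rightarrow> ('a \<Rightarrow> 'a) set" for G where
  gen_id: "id \<in> gen_group G"
| gen_mult: "g \<in> G \<Longrightarrow> h \<in> gen_group G \<Longrightarrow> h \<circ> g \<in> gen_group G"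
| gen_inv: "g \<in> G \<Longrightarrow> h \<in> gen_group G \<Longrightarrow> h \<circ> inv g \<in> gen_group G"

definition primitive :: "('a \<Rightarrow> 'a) set \<Rightarrow> bool" where
  "primitive G \<longleftrightarrow> (\<forall>x y. \<exists>g\<in>G. g x = y) \<and>
     (\<forall>P. partition_on UNIV P \<and> (\<forall>g\<in>G. maps_partition g P P) \<longrightarrow> trivial_partition P)"

end

theory Submission
  imports Defs
begin

(* Since the key schedule lets the round keys x, y, z of rounds i - 1, i, i + 1 vary freely
   while the other round keys stay fixed, every encryption function is, up to two fixed
   bijections, the pair of middle rounds
     w |-> ((w + x) gamma_i lambda_i + y) gamma_(i+1) lambda_(i+1) + z.
   Partitions A, B mapped onto each other by all these maps are translation invariant, hence
   coset partitions of subgroups U and W, and the partition in between is the coset partition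
   of a subgroup X.  A parallel map of differentially 2^r-uniform, strongly (r-1)-anti-invariant
   S-boxes can only map the cosets of a subgroup onto the cosets of another one if both are
   the same wall, so lambda_i maps the wall U onto the wall X, contradicting strong properness.
   Transitivity of the generated group comes from the free choice of z. *)

section \<open>The field with two elements\<close>

lemma UNIV_bit: "(UNIV :: bit set) = {0, 1}"
  using bit_not_zero_iff by blast

instance bit :: finite
  by standard (simp add: UNIV_bit)

lemma card_UNIV_bit: "CARD(bit) = 2"
  by (simp add: UNIV_bit)

interpretation F2: vector_space "sc :: bit \<Rightarrow> ('a \<Rightarrow> bit) \<Rightarrow> _"
  unfolding vector_space_def module_def sc_def
  by (auto simp: fun_eq_iff algebra_simps)

lemma sc_eq_0_or_self: "sc c x = 0 \<or> sc c x = x"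
  by (cases "c = 0") (auto simp: sc_def fun_eq_iff)

lemma bit_fun_diff_eq_add [simp]: "(x :: 'a \<Rightarrow> bit) - y = x + y"
  by (simp add: fun_eq_iff)

lemma bit_fun2_diff_eq_add [simp]: "(x :: 'b \<Rightarrow> 'a \<Rightarrow> bit) - y = x + y"
  by (simp add: fun_eq_iff)

lemma bit_fun_add_eq_0_iff [simp]: "(x :: 'a \<Rightarrow> bit) + y = 0 \<longleftrightarrow> x = y"
  by (metis bit_fun_diff_eq_add right_minus_eq)

lemma card_F2_span_le:
  fixes B :: "('a::finite \<Rightarrow> bit) set"
  shows "card (F2.span B) \<le> 2 ^ card B"
proof -
  have "finite B" by simp
  then show ?thesis
  proof (induction B rule: finite_induct)
    case empty
    then show ?case by simp
  next
    case (insert a B)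
    have "F2.span (insert a B) \<subseteq> F2.span B \<union> (+) a ` F2.span B"
    proof
      fix x assume "x \<in> F2.span (insert a B)"
      then obtain c where c: "x - sc c a \<in> F2.span B"
        by (auto simp: F2.span_insert)
      then show "x \<in> F2.span B \<union> (+) a ` F2.span B"
        using sc_eq_0_or_self[of c a] by (auto intro!: image_eqI[of x _ "x + a"] simp: add.assoc)
    qed
    then have "card (F2.span (insert a B)) \<le> card (F2.span B \<union> (+) a ` F2.span B)"
      by (intro card_mono) simp_all
    also have "\<dots> \<le> card (F2.span B) + card ((+) a ` F2.span B)"
      by (rule card_Un_le)
    also have "\<dots> \<le> 2 * card (F2.span B)"
      using card_image_le[of "F2.span B" "(+) a"] by simp
    also have "\<dots> \<le> 2 ^ card (insert a B)"
      using insert by simp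
    finally show ?case .
  qed
qed

lemma card_le_2_pow_f2_dim:
  fixes Y :: "('a::finite \<Rightarrow> bit) set"
  shows "card Y \<le> 2 ^ f2_dim Y"
proof -
  obtain B where "B \<subseteq> Y" "Y \<subseteq> F2.span B" "card B = f2_dim Y"
    by (rule F2.basis_exists)
  then have "card Y \<le> card (F2.span B)"
    by (intro card_mono) simp_all
  also have "\<dots> \<le> 2 ^ f2_dim Y"
    using card_F2_span_le \<open>card B = f2_dim Y\<close> by metis
  finally show ?thesis .
qed

section \<open>Subgroups, cosets and translation-invariant partitions\<close>

definition add_subgroup :: "'a::ab_group_add set \<Rightarrow> bool" where
  "add_subgroup U \<longleftrightarrow> 0 \<in> U \<and> (\<forall>x\<in>U. \<forall>y\<in>U. x + y \<in> U) \<and> (\<forall>x\<in>U. - x \<in> U)"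

lemma add_subgroupD:
  assumes "add_subgroup U"
  shows add_subgroup_0: "0 \<in> U"
    and add_subgroup_add: "x \<in> U \<Longrightarrow> y \<in> U \<Longrightarrow> x + y \<in> U"
    and add_subgroup_minus: "x \<in> U \<Longrightarrow> - x \<in> U"
  using assms by (auto simp: add_subgroup_def)

lemma add_subgroup_diff: "add_subgroup U \<Longrightarrow> x \<in> U \<Longrightarrow> y \<in> U \<Longrightarrow> x - y \<in> U"
  using add_subgroup_add[of U x "- y"] add_subgroup_minus[of U y] by simp

lemma add_subgroup_vimage:
  assumes "additive f" "add_subgroup U"
  shows "add_subgroup (f -` U)"
  using assms by (simp add: add_subgroup_def additive.add additive.zero additive.minus)

lemma add_image_iff: "w \<in> (+) c ` X \<longleftrightarrow> w - c \<in> (X :: 'a::ab_group_add set)"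
  by (metis add_diff_cancel_left' diff_add_cancel image_iff)

lemma coset_self: "add_subgroup U \<Longrightarrow> a \<in> (+) a ` U"
  using add_subgroup_0 by force

lemma coset_eq_if_mem:
  assumes "add_subgroup U" "c \<in> (+) b ` U"
  shows "(+) b ` U = (+) c ` U"
proof -
  have "c - b \<in> U"
    using assms(2) by (simp add: add_image_iff)
  then have "x - b \<in> U \<longleftrightarrow> x - c \<in> U" for x
    using add_subgroup_diff[OF assms(1), of "x - b" "c - b"] add_subgroup_add[OF assms(1), of "x - c" "c - b"]
    by auto
  then show ?thesis
    by (intro set_eqI) (simp add: add_image_iff)
qed

definition cosets :: "'a::plus set \<Rightarrow> 'a set set" where
  "cosets U = range (\<lambda>a. (+) a ` U)"

lemma translation_invariant_partition_cosets:
  fixes P :: "'a::ab_group_add set set"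
  assumes part: "partition_on UNIV P" and inv: "\<And>a. image ((+) a) ` P = P"
  obtains U where "add_subgroup U" "P = cosets U"
proof -
  have same_block: "X = Y" if "X \<in> P" "Y \<in> P" "z \<in> X" "z \<in> Y" for X Y z
    using that disjointD[OF partition_onD2[OF part]] by blast
  obtain U where U: "U \<in> P" "0 \<in> U"
    using partition_onD1[OF part] by blast
  have block: "(+) a ` U \<in> P" for a
    using U(1) inv[of a] by blast
  have shift: "(+) a ` U = U" if "a \<in> U" for a
    using same_block[OF block U(1) _ that] U(2) by force
  have "add_subgroup U"
    unfolding add_subgroup_def
  proof (intro conjI ballI)
    show "x + y \<in> U" if "x \<in> U" "y \<in> U" for x y
      using shift[OF that(1)] that(2) by blast
    show "- x \<in> U" if "x \<in> U" for x
    proof -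
      have "0 \<in> (+) x ` U"
        using shift[OF that] U(2) by simp
      then show ?thesis
        by (auto simp: add_image_iff)
    qed
  qed (rule U(2))
  moreover have "P = cosets U"
  proof
    show "cosets U \<subseteq> P"
      using block by (auto simp: cosets_def)
    show "P \<subseteq> cosets U"
    proof
      fix X assume "X \<in> P"
      then obtain a where "a \<in> X"
        using partition_onD3[OF part] by (metis ex_in_conv)
      then have "X = (+) a ` U"
        using same_block[OF \<open>X \<in> P\<close> block] coset_self[OF \<open>add_subgroup U\<close>] by blast
      then show "X \<in> cosets U"
        by (simp add: cosets_def)
    qed
  qed
  ultimately show ?thesis
    using that by blast
qed

lemma trivial_partition_cosets:
  fixes U :: "'a::ab_group_add set"
  assumes "U = {0} \<or> U = UNIV"
  shows "trivial_partition (cosets U)"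
  using assms
proof
  assume "U = {0}"
  then show ?thesis
    by (auto simp: trivial_partition_def cosets_def)
next
  assume "U = UNIV"
  then have "(+) a ` U = UNIV" for a
    using bij_plus[of a] by (simp add: bij_def)
  then show ?thesis
    by (auto simp: trivial_partition_def cosets_def)
qed

definition maps_cosets :: "('a::plus \<Rightarrow> 'a) \<Rightarrow> 'a set \<Rightarrow> 'a set \<Rightarrow> bool" where
  "maps_cosets g U W \<longleftrightarrow> (\<forall>a. g ` (+) a ` U = (+) (g a) ` W)"

lemma maps_partition_cosets:
  fixes g :: "'a::ab_group_add \<Rightarrow> 'a"
  assumes "add_subgroup U" "add_subgroup W" "maps_partition g (cosets U) (cosets W)"
  shows "maps_cosets g U W"
  unfolding maps_cosets_def
proof
  fix a
  have "g ` (+) a ` U \<in> image g ` cosets U"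
    unfolding cosets_def by (intro imageI rangeI)
  then have "g ` (+) a ` U \<in> cosets W"
    using assms(3) by (simp only: maps_partition_def)
  then obtain b where b: "g ` (+) a ` U = (+) b ` W"
    by (auto simp: cosets_def)
  have "g a \<in> (+) b ` W"
    using coset_self[OF assms(1)] by (metis b imageI)
  then show "g ` (+) a ` U = (+) (g a) ` W"
    using b coset_eq_if_mem[OF assms(2)] by simp
qed

lemma maps_cosets_diff_mem:
  fixes g :: "'a::ab_group_add \<Rightarrow> 'a"
  assumes "maps_cosets g U U'" "v \<in> U"
  shows "g (a + v) - g a \<in> U'"
proof -
  have "g (a + v) \<in> g ` (+) a ` U"
    using assms(2) by blast
  then show ?thesis
    using assms(1) by (simp add: maps_cosets_def add_image_iff)
qed

lemma maps_cosets_image: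
  fixes g :: "'a::ab_group_add \<Rightarrow> 'a"
  assumes "maps_cosets g U U'" "g 0 = 0"
  shows "g ` U = U'"
  using assms(1)[unfolded maps_cosets_def, rule_format, of 0] assms(2) by simp

lemma maps_cosets_additive_vimage:
  assumes "additive M" "inj M" "maps_cosets (M \<circ> f) U X"
  shows "maps_cosets f U (M -` X)"
  unfolding maps_cosets_def
proof
  fix a
  have "f ` (+) a ` U = M -` (M ` f ` (+) a ` U)"
    using assms(2) by (simp add: inj_vimage_image_eq)
  also have "\<dots> = M -` (+) (M (f a)) ` X"
    using assms(3) by (simp add: maps_cosets_def image_comp)
  also have "\<dots> = (+) (f a) ` (M -` X)"
    by (auto simp: add_image_iff additive.diff[OF assms(1)] additive.add[OF assms(1)])
  finally show "f ` (+) a ` U = (+) (f a) ` (M -` X)" .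
qed

lemma inj_image_bij: "bij f \<Longrightarrow> inj (image f)"
  by (simp add: bij_is_inj inj_on_image inj_on_subset)

lemma partition_on_UNIV_image_bij:
  assumes "bij g" "partition_on UNIV P"
  shows "partition_on UNIV (image g ` P)"
proof -
  have "partition_on (g ` UNIV) (image g ` P - {{}})"
    using assms by (intro partition_on_inj_image) (simp_all add: bij_is_inj)
  moreover have "{} \<notin> image g ` P"
    using partition_onD3[OF assms(2)] by auto
  ultimately show ?thesis
    using assms(1) by (simp add: bij_is_surj)
qed

lemma trivial_partition_image_bij:
  assumes "bij g" "trivial_partition P"
  shows "trivial_partition (image g ` P)"
proof -
  have "image g ` {{v} | v. True} = {{v} | v. True}"
    using bij_is_surj[OF assms(1)] by (auto intro!: image_eqI[of "{_}" _ "{inv g _}"] simp: surj_f_inv_f)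
  moreover have "g ` UNIV = UNIV"
    using assms(1) by (simp add: bij_is_surj)
  ultimately show ?thesis
    using assms(2) by (auto simp: trivial_partition_def)
qed

lemma trivial_partition_image_bij_iff:
  assumes "bij g"
  shows "trivial_partition (image g ` P) \<longleftrightarrow> trivial_partition P"
proof
  assume "trivial_partition (image g ` P)"
  then have "trivial_partition (image (inv g) ` image g ` P)"
    using assms bij_imp_bij_inv trivial_partition_image_bij by blast
  then show "trivial_partition P"
    using assms by (simp add: image_image image_inv_f_f bij_is_inj)
qed (use assms trivial_partition_image_bij in blast)

lemma maps_partition_conj:
  assumes "bij P" "bij Q" "maps_partition (Q \<circ> F \<circ> P) A B"
  shows "maps_partition F (image P ` A) (image (inv Q) ` B)"
  using assms unfolding maps_partition_def
  by (auto simp: image_image image_comp[symmetric] bij_is_inj inv_f_f)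

lemma image_translation_invariant_if_bij:
  assumes "bij f" "image f ` image ((+) a) ` P = image f ` P"
  shows "image ((+) a) ` P = P"
  using assms inj_image_bij inj_image_eq_iff by metis

(* The map sigma_x gamma_i lambda_i sigma_y gamma_(i+1) lambda_(i+1) sigma_z of the paper
   (read left to right), with G1 and G2 the unkeyed rounds gamma_h lambda_h. *)
definition two_rounds :: "('a \<Rightarrow> 'a) \<Rightarrow> ('a \<Rightarrow> 'a) \<Rightarrow> 'a \<Rightarrow> 'a \<Rightarrow> 'a \<Rightarrow> 'a \<Rightarrow> 'a::plus" where
  "two_rounds G1 G2 x y z = (+) z \<circ> G2 \<circ> (+) y \<circ> G1 \<circ> (+) x"

lemma bij_two_rounds: "bij G1 \<Longrightarrow> bij G2 \<Longrightarrow> bij (two_rounds G1 G2 x y (z :: 'a::ab_group_add))"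
  by (simp add: two_rounds_def bij_comp bij_plus)

lemma two_rounds_invariant_partitions_cosets:
  fixes G1 G2 :: "'a::ab_group_add \<Rightarrow> 'a"
  assumes bij: "bij G1" "bij G2"
    and part: "partition_on UNIV A" "partition_on UNIV B"
    and maps: "\<And>x y z. maps_partition (two_rounds G1 G2 x y z) A B"
  obtains U X W where "add_subgroup U" "add_subgroup X" "add_subgroup W" "A = cosets U"
    "maps_cosets G1 U X" "maps_cosets G2 X W"
proof -
  define M where "M = image G1 ` A"
  have maps': "image ((+) z \<circ> G2 \<circ> (+) y) ` M = B" for y z
    using maps[of 0 y z] by (simp add: maps_partition_def two_rounds_def M_def image_comp)
  have "image (G2 \<circ> G1) ` image ((+) x) ` A = image (G2 \<circ> G1) ` A" for x
    using maps[of x 0 0] maps[of 0 0 0] by (simp add: maps_partition_def two_rounds_def image_comp)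
  then have "image ((+) x) ` A = A" for x
    using bij by (intro image_translation_invariant_if_bij[of "G2 \<circ> G1"]) (simp_all add: bij_comp)
  then obtain U where U: "add_subgroup U" "A = cosets U"
    using translation_invariant_partition_cosets part(1) by blast
  have "image G2 ` image ((+) y) ` M = image G2 ` M" for y
    using maps'[where y=y and z=0] maps'[where y=0 and z=0] by (simp add: image_comp)
  then have "image ((+) y) ` M = M" for y
    by (rule image_translation_invariant_if_bij[OF bij(2)])
  moreover have "partition_on UNIV M"
    unfolding M_def using bij(1) part(1) by (rule partition_on_UNIV_image_bij)
  ultimately obtain X where X: "add_subgroup X" "M = cosets X"
    using translation_invariant_partition_cosets by blast
  have "image ((+) z) ` B = B" for z
  proof -
    have "image ((+) z) ` B = image ((+) z) ` image G2 ` M"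
      using maps'[where y=0 and z=0] by simp
    also have "\<dots> = B"
      using maps'[where y=0 and z=z] by (simp add: image_image)
    finally show ?thesis .
  qed
  then obtain W where W: "add_subgroup W" "B = cosets W"
    using translation_invariant_partition_cosets part(2) by blast
  have "maps_cosets G1 U X"
    using U X M_def by (intro maps_partition_cosets) (simp_all add: maps_partition_def)
  moreover have "maps_cosets G2 X W"
    using X W maps'[where y=0 and z=0] by (intro maps_partition_cosets) (simp_all add: maps_partition_def)
  ultimately show ?thesis
    using that U X W by blast
qed

section \<open>S-boxes, parallel maps and walls\<close>

lemma diff_uniform_le:
  fixes f :: "('m::finite \<Rightarrow> bit) \<Rightarrow> ('m \<Rightarrow> bit)"
  assumes "diff_uniform f d" "a \<noteq> 0"
  shows "delta_f f a b \<le> d"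
proof -
  have "finite {delta_f f a b | a b. a \<noteq> 0}"
    using finite_image_set2[of "\<lambda>a. a \<noteq> 0" "\<lambda>_. True" "delta_f f"] by simp
  then show ?thesis
    using assms unfolding diff_uniform_def by (auto intro: Max_ge)
qed

lemma card_UNIV_le_diff_uniform:
  fixes f :: "('m::finite \<Rightarrow> bit) \<Rightarrow> ('m \<Rightarrow> bit)"
  assumes "diff_uniform f d" "a \<noteq> 0" "\<And>t. f (t + a) + f t \<in> Z"
  shows "2 ^ CARD('m) \<le> d * card Z"
proof -
  have "(\<Union>b\<in>Z. {t. f (t + a) + f t = b}) = UNIV"
    using assms(3) by blast
  then have "(2::nat) ^ CARD('m) = card (\<Union>b\<in>Z. {t. f (t + a) + f t = b})"
    by (simp add: card_fun card_UNIV_bit)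
  also have "\<dots> \<le> (\<Sum>b\<in>Z. card {t. f (t + a) + f t = b})"
    by (rule card_UN_le) simp
  also have "\<dots> \<le> (\<Sum>b\<in>Z. d)"
    using diff_uniform_le[OF assms(1,2)] by (intro sum_mono) (simp add: delta_f_def)
  finally show ?thesis
    by (simp add: mult.commute)
qed

lemma add_subgroup_is_f2_subspace:
  fixes U :: "('a \<Rightarrow> bit) set"
  assumes "add_subgroup U"
  shows "f2_subspace U"
  unfolding F2.subspace_def
  using assms sc_eq_0_or_self by (metis add_subgroup_0 add_subgroup_add)

lemma sbox_subspace_full:
  fixes f :: "('m::finite \<Rightarrow> bit) \<Rightarrow> ('m \<Rightarrow> bit)"
  assumes bij: "bij f" and du: "diff_uniform f (2 ^ r)"
    and sai: "strongly_anti_invariant f (r - 1)"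
    and U: "add_subgroup U" and Y: "add_subgroup Y" and img: "f ` U = Y"
    and diff: "\<And>t w. w \<in> U \<Longrightarrow> f (t + w) + f t \<in> Y"
    and w: "w \<in> U" "w \<noteq> 0"
  shows "U = UNIV \<and> Y = UNIV"
proof -
  have "f (t + w) + f t \<in> Y - {0}" for t
    using diff[OF w(1)] w(2) bij_is_inj[OF bij] by (auto simp: inj_eq)
  then have "2 ^ CARD('m) \<le> 2 ^ r * card (Y - {0})"
    by (rule card_UNIV_le_diff_uniform[OF du w(2)])
  also have "\<dots> < 2 ^ r * card Y"
    using card_Diff1_less[OF finite add_subgroup_0[OF Y]] by simp
  also have "\<dots> \<le> 2 ^ r * 2 ^ f2_dim Y"
    by (simp add: card_le_2_pow_f2_dim)
  finally have "CARD('m) < r + f2_dim Y"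
    by (simp flip: power_add)
  moreover have "f2_dim U = f2_dim Y \<and> f2_dim U < CARD('m) - (r - 1) \<or> U = UNIV \<and> Y = UNIV"
    using sai img U Y add_subgroup_is_f2_subspace unfolding strongly_anti_invariant_def by blast
  ultimately show ?thesis
    by linarith
qed

lemma fun_upd_0_add: "(0(j := a)) + (0(j := b)) = (0(j := a + b) :: 'b \<Rightarrow> 'a::monoid_add)"
  by (simp add: fun_eq_iff)

lemma additive_fun_upd_0: "additive (\<lambda>w. (0(j := w) :: 'b \<Rightarrow> 'a::ab_group_add))"
  by (simp add: additive_def fun_upd_0_add)

lemma one_bit_fun_ne_0: "(1 :: 'a \<Rightarrow> bit) \<noteq> 0"
  by (simp add: fun_eq_iff)

lemma fun_upd_0_mem_wall_iff: "(0(j := 1) :: 'b \<Rightarrow> 'm \<Rightarrow> bit) \<in> wall I \<longleftrightarrow> j \<in> I"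
  using one_bit_fun_ne_0 by (simp add: wall_def)

lemma wall_eq_zero_iff: "wall I = ({0} :: ('b \<Rightarrow> 'm \<Rightarrow> bit) set) \<longleftrightarrow> I = {}"
proof
  assume wall: "wall I = ({0} :: ('b \<Rightarrow> 'm \<Rightarrow> bit) set)"
  have "j \<notin> I" for j
  proof
    assume "j \<in> I"
    then have "(0(j := 1) :: 'b \<Rightarrow> 'm \<Rightarrow> bit) \<in> wall I"
      by (simp add: fun_upd_0_mem_wall_iff)
    then have "(0(j := 1) :: 'b \<Rightarrow> 'm \<Rightarrow> bit) = 0"
      by (simp add: wall)
    then have "(1 :: 'm \<Rightarrow> bit) = 0"
      by (metis fun_upd_same zero_fun_apply)
    then show False
      by (simp add: one_bit_fun_ne_0)
  qed
  then show "I = {}"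
    by blast
qed (auto simp: wall_def)

lemma wall_eq_UNIV_iff: "wall I = (UNIV :: ('b \<Rightarrow> 'm \<Rightarrow> bit) set) \<longleftrightarrow> I = UNIV"
proof
  assume wall: "wall I = (UNIV :: ('b \<Rightarrow> 'm \<Rightarrow> bit) set)"
  have "(0(j := 1) :: 'b \<Rightarrow> 'm \<Rightarrow> bit) \<in> wall I" for j
    by (simp add: wall)
  then have "j \<in> I" for j
    by (simp add: fun_upd_0_mem_wall_iff)
  then show "I = UNIV"
    by blast
qed (simp add: wall_def)

lemma wall_subset_add_subgroup:
  fixes U :: "('b::finite \<Rightarrow> 'm \<Rightarrow> bit) set"
  assumes U: "add_subgroup U" and blocks: "\<And>j w. j \<in> I \<Longrightarrow> 0(j := w) \<in> U"
  shows "wall I \<subseteq> U"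
proof -
  have supported: "v \<in> U" if "finite J" "J \<subseteq> I" "\<forall>k. k \<notin> J \<longrightarrow> v k = 0" for J v
    using that
  proof (induction J arbitrary: v rule: finite_induct)
    case empty
    then have "v = 0"
      by (simp add: fun_eq_iff)
    then show ?case
      using add_subgroup_0[OF U] by (simp only:)
  next
    case (insert j J)
    have "v = 0(j := v j) + v(j := 0)"
      by (simp add: fun_eq_iff)
    moreover have "v(j := 0) \<in> U"
      using insert by (intro insert.IH) auto
    moreover have "0(j := v j) \<in> U"
      using blocks insert.prems(1) by simp
    ultimately show ?case
      using add_subgroup_add[OF U] by metis
  qed
  show ?thesis
    using supported[of I] by (simp add: wall_def subset_iff)
qed

lemma bij_parallel_map:
  assumes "\<And>j. bij (F j)"
  shows "bij (parallel_map F)"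
proof (rule o_bij[of "parallel_map (\<lambda>j. inv (F j))"])
  have "inv (F j) (F j x) = x" "F j (inv (F j) x) = x" for j x
    using assms[of j] by (simp_all add: bij_is_inj bij_is_surj surj_f_inv_f)
  then show "parallel_map (\<lambda>j. inv (F j)) \<circ> parallel_map F = id"
    "parallel_map F \<circ> parallel_map (\<lambda>j. inv (F j)) = id"
    by (simp_all add: fun_eq_iff parallel_map_def)
qed

lemma GL_V_additive: "L \<in> GL_V \<Longrightarrow> additive L"
  by (simp add: GL_V_def linear_iff additive_def)

lemma strongly_proper_wall_image:
  fixes L :: "('b \<Rightarrow> 'm \<Rightarrow> bit) \<Rightarrow> ('b \<Rightarrow> 'm \<Rightarrow> bit)"
  assumes sp: "strongly_proper L" and img: "L ` wall I = wall J"
  shows "I = {} \<or> I = UNIV"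
proof (rule ccontr)
  assume "\<not> (I = {} \<or> I = UNIV)"
  then have "is_wall (wall I :: ('b \<Rightarrow> 'm \<Rightarrow> bit) set)"
    by (auto simp: is_wall_def)
  have GL: "L \<in> GL_V"
    using sp by (simp add: strongly_proper_def)
  then have bij: "bij L"
    by (simp add: GL_V_def)
  have L0: "L 0 = 0"
    by (rule additive.zero[OF GL_V_additive[OF GL]])
  have "J \<noteq> {}"
  proof
    assume "J = {}"
    then have "L ` wall I = L ` {0}"
      using img L0 by (simp add: wall_eq_zero_iff)
    then have "wall I = ({0} :: ('b \<Rightarrow> 'm \<Rightarrow> bit) set)"
      using bij bij_is_inj inj_image_eq_iff by metis
    then show False
      using \<open>\<not> (I = {} \<or> I = UNIV)\<close> by (simp add: wall_eq_zero_iff)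
  qed
  moreover have "J \<noteq> UNIV"
  proof
    assume "J = UNIV"
    then have "L ` wall I = L ` UNIV"
      using img bij by (simp add: bij_is_surj wall_eq_UNIV_iff)
    then have "wall I = (UNIV :: ('b \<Rightarrow> 'm \<Rightarrow> bit) set)"
      using bij bij_is_inj inj_image_eq_iff by metis
    then show False
      using \<open>\<not> (I = {} \<or> I = UNIV)\<close> by (simp add: wall_eq_UNIV_iff)
  qed
  ultimately have "is_wall (wall J :: ('b \<Rightarrow> 'm \<Rightarrow> bit) set)"
    by (auto simp: is_wall_def)
  then have "\<not> L ` wall I \<subseteq> wall J"
    using sp \<open>is_wall (wall I :: ('b \<Rightarrow> 'm \<Rightarrow> bit) set)\<close> unfolding strongly_proper_def by blast
  then show False
    using img by simp
qed

locale sbox_layer =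
  fixes F :: "'b::finite \<Rightarrow> ('m::finite \<Rightarrow> bit) \<Rightarrow> ('m \<Rightarrow> bit)" and r :: nat
  assumes bij_sbox: "bij (F j)"
    and sbox_0: "F j 0 = 0"
    and diff_uniform_sbox: "diff_uniform (F j) (2 ^ r)"
    and r_less: "r < CARD('m)"
    and anti_invariant_sbox: "strongly_anti_invariant (F j) (r - 1)"
begin

lemma parallel_map_0: "parallel_map F 0 = 0"
  by (simp add: parallel_map_def sbox_0 fun_eq_iff)

lemma parallel_map_fun_upd_0: "parallel_map F (0(j := w)) = 0(j := F j w)"
  by (simp add: parallel_map_def sbox_0 fun_eq_iff)

lemma sbox_eq_0_iff: "F j x = 0 \<longleftrightarrow> x = 0"
  using inj_eq[OF bij_is_inj[OF bij_sbox], of j x 0] by (simp add: sbox_0)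

lemma parallel_map_apply_eq_0_iff: "parallel_map F v j = 0 \<longleftrightarrow> v j = 0"
  by (simp add: parallel_map_def sbox_eq_0_iff)

lemma parallel_map_eq_fun_upd_0:
  assumes "parallel_map F v = 0(k := y)"
  shows "v = 0(k := v k)"
proof -
  have "parallel_map F v j = 0" if "j \<noteq> k" for j
    using assms that by simp
  then have "v j = 0" if "j \<noteq> k" for j
    using that parallel_map_apply_eq_0_iff by blast
  then show ?thesis
    by (intro ext) simp
qed

lemma maps_cosets_block_image:
  assumes maps: "maps_cosets (parallel_map F) U U'"
  shows "F j ` ((\<lambda>w. 0(j := w)) -` U) = (\<lambda>w. 0(j := w)) -` U'"
proof
  show "F j ` ((\<lambda>w. 0(j := w)) -` U) \<subseteq> (\<lambda>w. 0(j := w)) -` U'"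
    using maps_cosets_image[OF maps parallel_map_0] by (auto simp flip: parallel_map_fun_upd_0)
  show "(\<lambda>w. 0(j := w)) -` U' \<subseteq> F j ` ((\<lambda>w. 0(j := w)) -` U)"
  proof
    fix y assume "y \<in> (\<lambda>w. 0(j := w)) -` U'"
    then obtain v where v: "v \<in> U" "parallel_map F v = 0(j := y)"
      using maps_cosets_image[OF maps parallel_map_0] by force
    have "v = 0(j := v j)"
      by (rule parallel_map_eq_fun_upd_0[OF v(2)])
    then show "y \<in> F j ` ((\<lambda>w. 0(j := w)) -` U)"
      using v by (metis fun_upd_same parallel_map_def vimageI image_eqI)
  qed
qed

(* The block u j of u need not itself lie in U, but the differences of F j in direction u j
   all lie in one coset of the block of U', which is therefore large by differential
   uniformity. *)
lemma maps_cosets_block_nonzero: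
  assumes U': "add_subgroup U'" and maps: "maps_cosets (parallel_map F) U U'"
    and u: "u \<in> U" "u j \<noteq> 0"
  obtains y where "y \<noteq> 0" "0(j := y) \<in> U'"
proof -
  define Y where "Y = (\<lambda>w. 0(j := w)) -` U'"
  define D where "D t = F j (t + u j) + F j t" for t
  have "D t \<in> (+) (D 0) ` Y" for t
  proof -
    have "parallel_map F (0(j := t) + u) + parallel_map F (0(j := t)) \<in> U'"
      "parallel_map F (0 + u) + parallel_map F 0 \<in> U'"
      using maps_cosets_diff_mem[OF maps u(1), of "0(j := t)"] maps_cosets_diff_mem[OF maps u(1), of 0]
      by simp_all
    then have "parallel_map F (0(j := t) + u) + parallel_map F (0(j := t))
        + (parallel_map F (0 + u) + parallel_map F 0) \<in> U'"
      by (rule add_subgroup_add[OF U'])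
    moreover have "parallel_map F (0(j := t) + u) + parallel_map F (0(j := t))
        + (parallel_map F (0 + u) + parallel_map F 0) = 0(j := D t + D 0)"
      by (simp add: fun_eq_iff parallel_map_def D_def sbox_0)
    ultimately show ?thesis
      by (simp add: Y_def add_image_iff)
  qed
  then have "2 ^ CARD('m) \<le> 2 ^ r * card ((+) (D 0) ` Y)"
    unfolding D_def by (rule card_UNIV_le_diff_uniform[OF diff_uniform_sbox u(2)])
  moreover have "(2::nat) ^ r < 2 ^ CARD('m)"
    using r_less by simp
  ultimately have card_gt_1: "1 < card ((+) (D 0) ` Y)"
    using mult_le_mono2[of "card ((+) (D 0) ` Y)" 1 "2 ^ r"] by linarith
  have "\<not> Y \<subseteq> {0}"
  proof
    assume "Y \<subseteq> {0}"
    then have "card ((+) (D 0) ` Y) \<le> card {D 0}"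
      by (intro card_mono) auto
    with card_gt_1 show False
      by simp
  qed
  then show ?thesis
    using that by (auto simp: Y_def)
qed

lemma maps_cosets_block_full:
  assumes U: "add_subgroup U" and U': "add_subgroup U'"
    and maps: "maps_cosets (parallel_map F) U U'"
    and u: "u \<in> U" "u j \<noteq> 0"
  shows "0(j := w) \<in> U \<and> 0(j := w) \<in> U'"
proof -
  define Uj where "Uj = (\<lambda>w. 0(j := w)) -` U"
  define Y where "Y = (\<lambda>w. 0(j := w)) -` U'"
  have subgroups: "add_subgroup Uj" "add_subgroup Y"
    unfolding Uj_def Y_def using U U' by (simp_all add: add_subgroup_vimage additive_fun_upd_0)
  have img: "F j ` Uj = Y"
    unfolding Uj_def Y_def by (rule maps_cosets_block_image[OF maps])
  have diff: "F j (t + w) + F j t \<in> Y" if "w \<in> Uj" for t w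
    using maps_cosets_diff_mem[OF maps, of "0(j := w)" "0(j := t)"] that
    by (simp add: Uj_def Y_def fun_upd_0_add parallel_map_fun_upd_0)
  obtain y where "y \<noteq> 0" "y \<in> Y"
    using maps_cosets_block_nonzero[OF U' maps u] by (auto simp: Y_def)
  then obtain s where s: "s \<in> Uj" "s \<noteq> 0"
    using img sbox_0 by force
  have "Uj = UNIV \<and> Y = UNIV"
    using bij_sbox diff_uniform_sbox anti_invariant_sbox subgroups img diff s
    by (rule sbox_subspace_full)
  then show ?thesis
    unfolding Uj_def Y_def by (metis UNIV_I vimageD)
qed

lemma maps_cosets_wall:
  assumes U: "add_subgroup U" and U': "add_subgroup U'"
    and maps: "maps_cosets (parallel_map F) U U'"
  obtains I where "U = wall I" "U' = wall I"
proof -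
  define I where "I = {j. \<exists>u\<in>U. u j \<noteq> 0}"
  have blocks: "0(j := w) \<in> U \<and> 0(j := w) \<in> U'" if "j \<in> I" for j w
    using that maps_cosets_block_full[OF U U' maps] by (auto simp: I_def)
  have "U \<subseteq> wall I"
    by (auto simp: wall_def I_def)
  moreover have "U' \<subseteq> wall I"
    using \<open>U \<subseteq> wall I\<close> maps_cosets_image[OF maps parallel_map_0]
    by (auto simp: wall_def parallel_map_apply_eq_0_iff)
  moreover have "wall I \<subseteq> U" "wall I \<subseteq> U'"
    using wall_subset_add_subgroup blocks U U' by blast+
  ultimately show ?thesis
    using that by blast
qed

end

lemma two_rounds_no_invariant_partition:
  fixes S1 S2 :: "'b::finite \<Rightarrow> ('m::finite \<Rightarrow> bit) \<Rightarrow> ('m \<Rightarrow> bit)"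
    and L1 L2 :: "('b \<Rightarrow> 'm \<Rightarrow> bit) \<Rightarrow> ('b \<Rightarrow> 'm \<Rightarrow> bit)"
  assumes layers: "sbox_layer S1 r" "sbox_layer S2 r"
    and sp: "strongly_proper L1" and GL: "L2 \<in> GL_V"
    and part: "partition_on UNIV A" "partition_on UNIV B" and nontrivial: "\<not> trivial_partition A"
    and maps: "\<And>x y z. maps_partition
      (two_rounds (L1 \<circ> parallel_map S1) (L2 \<circ> parallel_map S2) x y z) A B"
  shows False
proof -
  interpret layer1: sbox_layer S1 r by (fact layers(1))
  interpret layer2: sbox_layer S2 r by (fact layers(2))
  have GL1: "L1 \<in> GL_V"
    using sp by (simp add: strongly_proper_def)
  have bij: "bij L1" "bij L2"
    using GL1 GL by (simp_all add: GL_V_def)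
  have additive: "additive L1" "additive L2"
    using GL1 GL by (simp_all add: GL_V_additive)
  obtain U X W where subgroups: "add_subgroup U" "add_subgroup X" "add_subgroup W"
    and "A = cosets U" and maps1: "maps_cosets (L1 \<circ> parallel_map S1) U X"
    and maps2: "maps_cosets (L2 \<circ> parallel_map S2) X W"
    using two_rounds_invariant_partitions_cosets[OF _ _ part maps]
      bij layer1.bij_sbox layer2.bij_sbox by (metis bij_comp bij_parallel_map)
  have "U \<noteq> {0}" "U \<noteq> UNIV"
    using nontrivial trivial_partition_cosets \<open>A = cosets U\<close> by blast+
  obtain I where I: "U = wall I" "L1 -` X = wall I"
    using layer1.maps_cosets_wall[OF subgroups(1) add_subgroup_vimage[OF additive(1) subgroups(2)]
        maps_cosets_additive_vimage[OF additive(1) bij_is_inj[OF bij(1)] maps1]] .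
  obtain J where J: "X = wall J"
    using layer2.maps_cosets_wall[OF subgroups(2) add_subgroup_vimage[OF additive(2) subgroups(3)]
        maps_cosets_additive_vimage[OF additive(2) bij_is_inj[OF bij(2)] maps2]] .
  have "L1 ` wall I = wall J"
    using I(2) J bij(1) by (metis bij_is_surj surj_image_vimage_eq)
  then have "I = {} \<or> I = UNIV"
    by (rule strongly_proper_wall_image[OF sp])
  then show False
    using \<open>U \<noteq> {0}\<close> \<open>U \<noteq> UNIV\<close> I(1) by (auto simp: wall_eq_zero_iff wall_eq_UNIV_iff)
qed

lemma conjugate_two_rounds_no_invariant_partition:
  fixes S1 S2 :: "'b::finite \<Rightarrow> ('m::finite \<Rightarrow> bit) \<Rightarrow> ('m \<Rightarrow> bit)"
    and L1 L2 P Q :: "('b \<Rightarrow> 'm \<Rightarrow> bit) \<Rightarrow> ('b \<Rightarrow> 'm \<Rightarrow> bit)"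
  assumes layers: "sbox_layer S1 r" "sbox_layer S2 r"
    and sp: "strongly_proper L1" and GL: "L2 \<in> GL_V" and bij: "bij P" "bij Q"
    and conj: "\<And>x y z. \<exists>k. E k =
      Q \<circ> two_rounds (L1 \<circ> parallel_map S1) (L2 \<circ> parallel_map S2) x y z \<circ> P"
  shows "\<not> (\<exists>A B. partition_on UNIV A \<and> partition_on UNIV B \<and>
    \<not> trivial_partition A \<and> \<not> trivial_partition B \<and> (\<forall>k. maps_partition (E k) A B))"
proof clarify
  fix A B
  assume part: "partition_on UNIV A" "partition_on UNIV B" and "\<not> trivial_partition A"
    and maps: "\<forall>k. maps_partition (E k) A B"
  have "maps_partition (two_rounds (L1 \<circ> parallel_map S1) (L2 \<circ> parallel_map S2) x y z)
      (image P ` A) (image (inv Q) ` B)" for x y z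
    using conj[of x y z] maps maps_partition_conj[OF bij] by metis
  moreover have "\<not> trivial_partition (image P ` A)"
    using \<open>\<not> trivial_partition A\<close> trivial_partition_image_bij_iff[OF bij(1)] by simp
  ultimately show False
    using two_rounds_no_invariant_partition[OF layers sp GL
        partition_on_UNIV_image_bij[OF bij(1) part(1)]
        partition_on_UNIV_image_bij[OF bij_imp_bij_inv[OF bij(2)] part(2)]]
    by blast
qed

section \<open>The cipher\<close>

lemma enc_rounds_add:
  "enc_rounds S L kk (a + d) v =
     enc_rounds (\<lambda>h. S (a + h)) (\<lambda>h. L (a + h)) (\<lambda>h. kk (a + h)) d (enc_rounds S L kk a v)"
  by (induction d) simp_all

lemma enc_rounds_cong:
  assumes "\<And>h. h \<in> {1..n} \<Longrightarrow> kk h = kk' h"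
  shows "enc_rounds S L kk n = enc_rounds S L kk' n"
proof -
  have "enc_rounds S L kk n v = enc_rounds S L kk' n v" for v
    using assms by (induction n) simp_all
  then show ?thesis
    by (simp add: fun_eq_iff)
qed

lemma bij_enc_rounds:
  assumes "\<And>h j. h \<in> {1..n} \<Longrightarrow> bij (S h j)" "\<And>h. h \<in> {1..n} \<Longrightarrow> bij (L h)"
  shows "bij (enc_rounds S L kk n)"
  using assms
proof (induction n)
  case 0
  then show ?case
    by (simp add: id_def[symmetric])
next
  case (Suc n)
  have "bij ((\<lambda>v. v + kk (Suc n)) \<circ> L (Suc n) \<circ> parallel_map (S (Suc n)) \<circ> enc_rounds S L kk n)"
    using Suc by (intro bij_comp bij_plus_right bij_parallel_map) auto
  moreover have "enc_rounds S L kk (Suc n) =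
      (\<lambda>v. v + kk (Suc n)) \<circ> L (Suc n) \<circ> parallel_map (S (Suc n)) \<circ> enc_rounds S L kk n"
    by (simp add: fun_eq_iff)
  ultimately show ?case
    by (simp only:)
qed

lemma enc_rounds_middle_split:
  assumes "2 \<le> i" "i < n"
  shows "enc_rounds S L (kk(i - 1 := x, i := y, i + 1 := z)) n =
    enc_rounds (\<lambda>h. S (i + 1 + h)) (\<lambda>h. L (i + 1 + h)) (\<lambda>h. kk (i + 1 + h)) (n - (i + 1))
    \<circ> two_rounds (L i \<circ> parallel_map (S i)) (L (i + 1) \<circ> parallel_map (S (i + 1))) x y z
    \<circ> L (i - 1) \<circ> parallel_map (S (i - 1)) \<circ> enc_rounds S L kk (i - 2)"
proof (rule ext)
  fix v
  define kk' where "kk' = kk(i - 1 := x, i := y, i + 1 := z)"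
  obtain j where i: "i = Suc (Suc j)"
    using assms(1) by (metis add_2_eq_Suc le_Suc_ex)
  have "enc_rounds S L kk' n v = enc_rounds (\<lambda>h. S (i + 1 + h)) (\<lambda>h. L (i + 1 + h))
      (\<lambda>h. kk' (i + 1 + h)) (n - (i + 1)) (enc_rounds S L kk' (i + 1) v)"
    using enc_rounds_add[of S L kk' "i + 1" "n - (i + 1)" v] assms(2) by simp
  also have "\<dots> = enc_rounds (\<lambda>h. S (i + 1 + h)) (\<lambda>h. L (i + 1 + h))
      (\<lambda>h. kk (i + 1 + h)) (n - (i + 1)) (enc_rounds S L kk' (i + 1) v)"
    by (rule fun_cong[OF enc_rounds_cong]) (use assms(1) in \<open>auto simp: kk'_def\<close>)
  also have "enc_rounds S L kk' (i + 1) v =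
      two_rounds (L i \<circ> parallel_map (S i)) (L (i + 1) \<circ> parallel_map (S (i + 1))) x y z
        (L (i - 1) (parallel_map (S (i - 1)) (enc_rounds S L kk (i - 2) v)))"
    using enc_rounds_cong[of j kk' kk S L] by (simp add: i two_rounds_def kk'_def add.commute)
  finally show "enc_rounds S L kk' n v = (enc_rounds (\<lambda>h. S (i + 1 + h)) (\<lambda>h. L (i + 1 + h))
      (\<lambda>h. kk (i + 1 + h)) (n - (i + 1))
    \<circ> two_rounds (L i \<circ> parallel_map (S i)) (L (i + 1) \<circ> parallel_map (S (i + 1))) x y z
    \<circ> L (i - 1) \<circ> parallel_map (S (i - 1)) \<circ> enc_rounds S L kk (i - 2)) v"
    by simp
qed

lemma three_round_indep_keys:
  assumes "three_round_indep Phi ell i" "1 \<le> i"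
  obtains kbar where
    "\<And>x y z. \<exists>k. enc_rounds S L (Phi k) ell = enc_rounds S L (kbar(i - 1 := x, i := y, i + 1 := z)) ell"
proof -
  obtain kbar where kbar: "\<forall>x y z. \<exists>k. \<forall>h\<in>{1..ell}.
      Phi k h = (if h = i - 1 then x else if h = i then y else if h = i + 1 then z else kbar h)"
    using assms(1) unfolding three_round_indep_def by blast
  have "\<exists>k. enc_rounds S L (Phi k) ell = enc_rounds S L (kbar(i - 1 := x, i := y, i + 1 := z)) ell"
    for x y z
  proof -
    obtain k where "\<forall>h\<in>{1..ell}.
        Phi k h = (if h = i - 1 then x else if h = i then y else if h = i + 1 then z else kbar h)"
      using kbar by blast
    then have "enc_rounds S L (Phi k) ell = enc_rounds S L (kbar(i - 1 := x, i := y, i + 1 := z)) ell"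
      using assms(2) by (intro enc_rounds_cong) auto
    then show ?thesis ..
  qed
  then show ?thesis
    using that by blast
qed

lemma three_round_indep_conjugate:
  assumes indep: "three_round_indep Phi ell i" and i: "2 \<le> i" "i < ell"
    and bij_S: "\<And>h j. h \<in> {1..ell} \<Longrightarrow> bij (S h j)"
    and bij_L: "\<And>h. h \<in> {1..ell} \<Longrightarrow> bij (L h)"
  obtains P Q where "bij P" "bij Q" "\<And>x y z. \<exists>k. enc_rounds S L (Phi k) ell =
    Q \<circ> two_rounds (L i \<circ> parallel_map (S i)) (L (i + 1) \<circ> parallel_map (S (i + 1))) x y z \<circ> P"
proof -
  obtain kbar where keys: "\<And>x y z. \<exists>k. enc_rounds S L (Phi k) ell =
      enc_rounds S L (kbar(i - 1 := x, i := y, i + 1 := z)) ell"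
    using three_round_indep_keys[OF indep] i(1) by (metis one_le_numeral order_trans)
  define P where "P = L (i - 1) \<circ> parallel_map (S (i - 1)) \<circ> enc_rounds S L kbar (i - 2)"
  define Q where "Q = enc_rounds (\<lambda>h. S (i + 1 + h)) (\<lambda>h. L (i + 1 + h)) (\<lambda>h. kbar (i + 1 + h))
    (ell - (i + 1))"
  have "bij P"
    unfolding P_def using i by (intro bij_comp bij_enc_rounds bij_parallel_map bij_S bij_L) auto
  moreover have "bij Q"
    unfolding Q_def using i by (intro bij_enc_rounds bij_S bij_L) auto
  moreover have "\<exists>k. enc_rounds S L (Phi k) ell =
      Q \<circ> two_rounds (L i \<circ> parallel_map (S i)) (L (i + 1) \<circ> parallel_map (S (i + 1))) x y z \<circ> P"
    for x y z
    using keys[of x y z] unfolding enc_rounds_middle_split[OF i] P_def Q_def by (simp only: comp_assoc)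
  ultimately show ?thesis
    using that by blast
qed

section \<open>Primitivity\<close>

lemma mem_gen_group: "g \<in> G \<Longrightarrow> g \<in> gen_group G"
  using gen_mult[OF _ gen_id] by simp

lemma gen_group_transitive:
  fixes P Q :: "'a::ab_group_add \<Rightarrow> 'a"
  assumes "bij P" "bij Q" "\<And>z. Q \<circ> (+) z \<circ> P \<in> Gens"
  shows "\<exists>g\<in>gen_group Gens. g x = y"
proof -
  define z where "z = inv Q y - inv Q x"
  have "Q \<circ> P \<in> Gens"
    using assms(3)[of 0] by (simp add: comp_def)
  then have "(Q \<circ> (+) z \<circ> P) \<circ> inv (Q \<circ> P) \<in> gen_group Gens"
    by (rule gen_inv[OF _ mem_gen_group[OF assms(3)]])
  moreover have "((Q \<circ> (+) z \<circ> P) \<circ> inv (Q \<circ> P)) x = y"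
    using assms(1,2) by (simp add: z_def o_inv_distrib bij_is_surj surj_f_inv_f)
  ultimately show ?thesis
    by blast
qed

lemma conjugate_two_rounds_transitive:
  fixes G1 G2 P Q :: "'a::ab_group_add \<Rightarrow> 'a"
  assumes bij: "bij G1" "bij G2" "bij P" "bij Q"
    and conj: "\<And>x y z. \<exists>k. E k = Q \<circ> two_rounds G1 G2 x y z \<circ> P"
  shows "\<exists>g\<in>gen_group {E k | k. True}. g v = w"
proof (rule gen_group_transitive)
  show "bij (two_rounds G1 G2 0 0 0 \<circ> P)"
    using bij by (simp add: bij_comp bij_two_rounds)
  show "Q \<circ> (+) z \<circ> (two_rounds G1 G2 0 0 0 \<circ> P) \<in> {E k | k. True}" for z
  proof -
    have "Q \<circ> (+) z \<circ> (two_rounds G1 G2 0 0 0 \<circ> P) = Q \<circ> two_rounds G1 G2 0 0 z \<circ> P"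
      by (simp add: two_rounds_def fun_eq_iff)
    then show ?thesis
      using conj[of 0 0 z] by (metis (mono_tags, lifting) mem_Collect_eq)
  qed
qed (fact bij(4))

lemma primitive_gen_groupI:
  assumes "\<And>x y. \<exists>g\<in>gen_group G. g x = y"
    and "\<And>P. partition_on UNIV P \<Longrightarrow> \<forall>g\<in>G. maps_partition g P P \<Longrightarrow> trivial_partition P"
  shows "primitive (gen_group G)"
  using assms mem_gen_group unfolding primitive_def by blast

theorem theorem3p3:
  fixes S :: "nat \<Rightarrow> 'b::finite \<Rightarrow> ('m::finite \<Rightarrow> bit) \<Rightarrow> ('m \<Rightarrow> bit)"
    and L :: "nat \<Rightarrow> ('b \<Rightarrow> 'm \<Rightarrow> bit) \<Rightarrow> ('b \<Rightarrow> 'm \<Rightarrow> bit)"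
    and Phi :: "'k \<Rightarrow> nat \<Rightarrow> ('b \<Rightarrow> 'm \<Rightarrow> bit)"
    and ell i r :: nat
  assumes m_gt: "CARD('m) > 1" and b_gt: "CARD('b) > 1"
    and sboxes: "\<forall>h\<in>{1..ell}. \<forall>j. bij (S h j) \<and> S h j 0 = 0"
    and lins: "\<forall>h\<in>{1..ell}. L h \<in> GL_V"
    and i_range: "2 \<le> i" "i \<le> ell - 1"
    and indep: "three_round_indep Phi ell i"
    and du: "\<forall>h\<in>{i, i+1}. \<forall>j. diff_uniform (S h j) (2 ^ r)"
    and r_lt: "r < CARD('m)"
    and sai: "\<forall>h\<in>{i, i+1}. \<forall>j. strongly_anti_invariant (S h j) (r - 1)"
    and sp: "strongly_proper (L i)"
  shows "(\<not> (\<exists>A B. partition_on UNIV A \<and> partition_on UNIV B \<and>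
              \<not> trivial_partition A \<and> \<not> trivial_partition B \<and>
              (\<forall>k. maps_partition (enc_rounds S L (Phi k) ell) A B)))
       \<and> primitive (gen_group {enc_rounds S L (Phi k) ell | k. True})"
proof -
  have i: "2 \<le> i" "i < ell"
    using i_range by auto
  have bij_S: "bij (S h j)" and bij_L: "bij (L h)" if "h \<in> {1..ell}" for h j
    using that sboxes lins by (simp_all add: GL_V_def)
  obtain P Q where bij: "bij P" "bij Q" and conj: "\<And>x y z. \<exists>k. enc_rounds S L (Phi k) ell =
      Q \<circ> two_rounds (L i \<circ> parallel_map (S i)) (L (i + 1) \<circ> parallel_map (S (i + 1))) x y z \<circ> P"
    using three_round_indep_conjugate[where S = S and L = L, OF indep i bij_S bij_L] by blast
  have layers: "sbox_layer (S i) r" "sbox_layer (S (i + 1)) r"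
    using i sboxes du sai r_lt by (unfold_locales; simp)+
  have no_partition: "\<not> (\<exists>A B. partition_on UNIV A \<and> partition_on UNIV B \<and>
      \<not> trivial_partition A \<and> \<not> trivial_partition B \<and>
      (\<forall>k. maps_partition (enc_rounds S L (Phi k) ell) A B))"
    using conjugate_two_rounds_no_invariant_partition[OF layers sp _ bij conj] i lins by simp
  have "primitive (gen_group {enc_rounds S L (Phi k) ell | k. True})"
  proof (rule primitive_gen_groupI)
    show "\<exists>g\<in>gen_group {enc_rounds S L (Phi k) ell | k. True}. g v = w" for v w
      using i bij_S bij_L
      by (intro conjugate_two_rounds_transitive[OF _ _ bij conj] bij_comp bij_parallel_map) auto
    show "trivial_partition A"
      if "partition_on UNIV A" "\<forall>g\<in>{enc_rounds S L (Phi k) ell | k. True}. maps_partition g A A" for A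
      using no_partition that by blast
  qed
  with no_partition show ?thesis
    by blast
qed

end
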